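(* $\mathcal M_\infty\subset\mathcal M_{-\infty}$.
   Context: Standing assumptions: $H$ is a real Hilbert space with norm $|\cdot|$. $A$ is a linear, closed, unbounded, positive self-adjoint operator on $H$ with compact inverse, so $H$ has an orthonormal basis of eigenvectors of $A$ with eigenvalues $0<\lambda_1<\lambda_2\le\cdots\le\lambda_N<\lambda_{N+1}\le\cdots\to\infty$ (counted with multiplicity). $F:H\to H$ satisfies $|F(u)|\le K_0$ and $|F(u)-F(v)|\le K_1|u-v|$ for all $u,v\in H$, with constants $K_0,K_1>0$ and $K_1<\lambda_{N+1}$; moreover there is $R>0$ with $F(u)=0$ whenever $|u|\ge R$. $P$ is the orthogonal (spectral) projection onto the span of the first $N$ eigenvectors of $A$, and $Q=I-P$; points of $H$ are identified with pairs $(p,q)\in PH\times QH$. A solution on an interval $J$ means a continuous function satisfying the variation of constants formula $u(t)=e^{-A(t-s)}u(s)+\int_s^t e^{-A(t-\tau)}F(u(\tau))\,d\tau$ for all $s\le t$ in $J$. For $t>0$, $\mathcal M_t=\{u(t): u \text{ is a solution of } u_t+Au=F(u) \text{ on } [0,t] \text{ with } Pu(0)\in PH \text{ arbitrary and } Qu(0)=0\}$. $\mathcal M_\infty$ is the set of all $(p_\infty,q_\infty)\in H$ for which there exist integers $n_1<n_2<\cdots$ and points $(p_{n_k},q_{n_k})\in\mathcal M_{n_k}$ with $(p_{n_k},q_{n_k})\to(p_\infty,q_\infty)$ in $H$. $\mathcal M_{-\infty}$ is the set of all $(p_0,q_0)\in H$ such that there is a solution $u(t)=p(t)+q(t)$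 of $u_t+Au=F(u)$ on $(-\infty,0]$ with $p(0)=p_0$, $q(0)=q_0$ and $q(t)=Qu(t)$ bounded on $(-\infty,0]$ (the backward bounded solutions). *)

theory Defs
  imports "HOL-Analysis.Analysis"
begin

text \<open>The operator A is given through its spectral data: an orthonormal basis
  e 0, e 1, ... of eigenvectors with eigenvalues lam 0, lam 1, ...
  (0-indexed: lam k is the paper's lambda_(k+1)).\<close>

definition expA :: "(nat \<Rightarrow> 'a::{real_inner,complete_space}) \<Rightarrow> (nat \<Rightarrow> real) \<Rightarrow> real \<Rightarrow> 'a \<Rightarrow> 'a" where
  "expA e lam t x = (\<Sum>k. (exp (- (t * lam k)) * (x \<bullet> e k)) *\<^sub>R e k)"

definition projP :: "(nat \<Rightarrow> 'a::real_inner) \<Rightarrow> nat \<Rightarrow> 'a \<Rightarrow> 'a" where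
  "projP e N x = (\<Sum>k<N. (x \<bullet> e k) *\<^sub>R e k)"

definition projQ :: "(nat \<Rightarrow> 'a::real_inner) \<Rightarrow> nat \<Rightarrow> 'a \<Rightarrow> 'a" where
  "projQ e N x = x - projP e N x"

text \<open>u is a (mild) solution of u_t + A u = F(u) on the interval J: continuous and
  satisfying the variation of constants formula for all s \<le> t in J.\<close>
definition is_solution ::
  "(nat \<Rightarrow> 'a::{real_inner,complete_space}) \<Rightarrow> (nat \<Rightarrow> real) \<Rightarrow> ('a \<Rightarrow> 'a) \<Rightarrow> real set \<Rightarrow> (real \<Rightarrow> 'a) \<Rightarrow> bool" where
  "is_solution e lam F J u \<longleftrightarrow> continuous_on J u \<and>
     (\<forall>s\<in>J. \<forall>t\<in>J. s \<le> t \<longrightarrow>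
        ((\<lambda>\<tau>. expA e lam (t - \<tau>) (F (u \<tau>))) has_integral (u t - expA e lam (t - s) (u s))) {s..t})"

definition Mt ::
  "(nat \<Rightarrow> 'a::{real_inner,complete_space}) \<Rightarrow> (nat \<Rightarrow> real) \<Rightarrow> nat \<Rightarrow> ('a \<Rightarrow> 'a) \<Rightarrow> real \<Rightarrow> 'a set" where
  "Mt e lam N F t = {u t | u. is_solution e lam F {0..t} u \<and> projQ e N (u 0) = 0}"

definition M_infty ::
  "(nat \<Rightarrow> 'a::{real_inner,complete_space}) \<Rightarrow> (nat \<Rightarrow> real) \<Rightarrow> nat \<Rightarrow> ('a \<Rightarrow> 'a) \<Rightarrow> 'a set" where
  "M_infty e lam N F = {y. \<exists>n :: nat \<Rightarrow> nat. \<exists>x :: nat \<Rightarrow> 'a.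
      strict_mono n \<and> (\<forall>k. n k > 0) \<and> (\<forall>k. x k \<in> Mt e lam N F (real (n k))) \<and> x \<longlonglongrightarrow> y}"

definition M_minus_infty ::
  "(nat \<Rightarrow> 'a::{real_inner,complete_space}) \<Rightarrow> (nat \<Rightarrow> real) \<Rightarrow> nat \<Rightarrow> ('a \<Rightarrow> 'a) \<Rightarrow> 'a set" where
  "M_minus_infty e lam N F = {y. \<exists>u. is_solution e lam F {..0} u \<and> u 0 = y \<and>
      bounded ((\<lambda>t. projQ e N (u t)) ` {..0})}"

end

theory Submission
  imports Defs "HOL-Library.Diagonal_Subsequence"
begin

text \<open>Let \<open>x_k = u_k(n_k) \<in> M_(n_k)\<close> converge to \<open>y\<close>, and shift \<open>u_k\<close> to the interval
  \<open>[-n_k, 0]\<close>. Since \<open>Q u_k(0) = 0\<close>, the semigroup damps the modes beyond \<open>M\<close> at rate \<open>lam M\<close>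
  against a forcing of size at most \<open>K0\<close>, so the tail projections satisfy \<open>|Q_M u_k(t)| \<le> K0 / lam M\<close>
  uniformly; running the equation backwards from the bounded endpoint bounds each single
  coordinate at a fixed time \<open>-m\<close>. Hence the values at time \<open>-m\<close> are precompact, and a diagonal
  subsequence converges at all integer times. Distances between two solutions at most double over
  time steps of length \<open>1 / (2 K1)\<close>, so the convergence is locally uniform on \<open>(-\<infinity>, 0]\<close> and the
  limit is a mild solution \<open>U\<close> there, with \<open>U(0) = y\<close> and \<open>|Q U(t)| \<le> K0 / lam N\<close>.\<close>

text \<open>The Hilbert space sort \<open>{real_inner, complete_space}\<close> is not an instance of \<open>banach\<close>, so the
  library's integral bounds and uniform-limit integrals (which need \<open>banach\<close> or continuous
  integrands) are replaced by the following two lemmas.\<close>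

lemma norm_le_if_has_integral_norm_le:
  fixes f :: "'n::euclidean_space \<Rightarrow> 'b::real_inner"
  assumes f: "(f has_integral I) S" and g: "(g has_integral J) S"
    and le: "\<And>x. x \<in> S \<Longrightarrow> norm (f x) \<le> g x"
  shows "norm I \<le> J"
proof (cases "I = 0")
  case True
  have "0 \<le> J"
    by (rule has_integral_nonneg[OF g]) (use le norm_ge_zero order_trans in blast)
  then show ?thesis using True by simp
next
  case False
  define w where "w = I /\<^sub>R norm I"
  have "(((\<lambda>x. x \<bullet> w) \<circ> f) has_integral I \<bullet> w) S"
    by (rule has_integral_linear[OF f bounded_linear_inner_left])
  then have "I \<bullet> w \<le> J"
  proof (rule has_integral_le[OF _ g])
    fix x assume "x \<in> S"
    then show "((\<lambda>x. x \<bullet> w) \<circ> f) x \<le> g x"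
      using norm_cauchy_schwarz[of "f x" w] le False by (fastforce simp: w_def)
  qed
  moreover have "I \<bullet> w = norm I"
    using False by (simp add: w_def dot_square_norm power2_eq_square)
  ultimately show ?thesis by simp
qed

lemma has_integral_uniform_limit:
  fixes f :: "'n::euclidean_space \<Rightarrow> 'b::real_normed_vector"
  assumes unif: "uniform_limit (cbox a b) g f sequentially"
    and integrals: "\<forall>\<^sub>F n in sequentially. (g n has_integral I n) (cbox a b)"
    and lim: "I \<longlonglongrightarrow> J"
  shows "(f has_integral J) (cbox a b)"
  unfolding has_integral
proof (intro allI impI)
  fix \<epsilon> :: real assume "\<epsilon> > 0"
  define c where "c = Henstock_Kurzweil_Integration.content (cbox a b)"
  define \<delta> where "\<delta> = \<epsilon> / 3 / (c + 1)"
  have "c \<ge> 0" by (simp add: c_def)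
  with \<open>\<epsilon> > 0\<close> have "\<delta> > 0" and \<delta>c: "\<delta> * c < \<epsilon> / 3"
    by (auto simp: \<delta>_def field_simps)
  have "\<forall>\<^sub>F n in sequentially. dist (I n) J < \<epsilon> / 3"
    using lim \<open>\<epsilon> > 0\<close> by (intro tendstoD) simp_all
  moreover have "\<forall>\<^sub>F n in sequentially. \<forall>x\<in>cbox a b. dist (g n x) (f x) < \<delta>"
    using uniform_limitD[OF unif \<open>\<delta> > 0\<close>] .
  ultimately have "\<forall>\<^sub>F n in sequentially. (g n has_integral I n) (cbox a b) \<and> norm (I n - J) < \<epsilon> / 3
      \<and> (\<forall>x\<in>cbox a b. norm (f x - g n x) \<le> \<delta>)"
    using integrals by eventually_elim (auto simp: dist_norm norm_minus_commute intro: less_imp_le)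
  then obtain n where gn: "(g n has_integral I n) (cbox a b)" and In: "norm (I n - J) < \<epsilon> / 3"
    and near: "\<And>x. x \<in> cbox a b \<Longrightarrow> norm (f x - g n x) \<le> \<delta>"
    unfolding eventually_sequentially by blast
  obtain \<gamma> where "gauge \<gamma>" and \<gamma>: "\<And>\<D>. \<D> tagged_division_of cbox a b \<Longrightarrow> \<gamma> fine \<D> \<Longrightarrow>
      norm ((\<Sum>(x,k)\<in>\<D>. Henstock_Kurzweil_Integration.content k *\<^sub>R g n x) - I n) < \<epsilon> / 3"
    using gn[unfolded has_integral] \<open>\<epsilon> > 0\<close> by (meson divide_pos_pos zero_less_numeral)
  show "\<exists>\<gamma>. gauge \<gamma> \<and> (\<forall>\<D>. \<D> tagged_division_of cbox a b \<and> \<gamma> fine \<D> \<longrightarrow>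
      norm ((\<Sum>(x,k)\<in>\<D>. Henstock_Kurzweil_Integration.content k *\<^sub>R f x) - J) < \<epsilon>)"
  proof (intro exI conjI allI impI)
    fix \<D> assume \<D>: "\<D> tagged_division_of cbox a b \<and> \<gamma> fine \<D>"
    let ?Sf = "\<Sum>(x,k)\<in>\<D>. Henstock_Kurzweil_Integration.content k *\<^sub>R f x"
    let ?Sg = "\<Sum>(x,k)\<in>\<D>. Henstock_Kurzweil_Integration.content k *\<^sub>R g n x"
    have "norm (?Sf - ?Sg) \<le> \<delta> * c"
      using \<D> near unfolding c_def by (intro rsum_diff_bound) auto
    moreover have "norm (?Sf - J) \<le> norm (?Sf - ?Sg) + norm (?Sg - I n) + norm (I n - J)"
      using norm_triangle_ineq[of "?Sf - ?Sg" "?Sg - I n"] norm_triangle_ineq[of "?Sf - I n" "I n - J"]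
      by simp
    ultimately show "norm (?Sf - J) < \<epsilon>"
      using \<gamma> \<D> In \<delta>c by fastforce
  qed (fact \<open>gauge \<gamma>\<close>)
qed

lemma diagonal_convergent_subseq:
  fixes X :: "nat \<Rightarrow> nat \<Rightarrow> 'b::metric_space"
  assumes "\<And>m. \<exists>K S. compact S \<and> (\<forall>k\<ge>K. X m k \<in> S)"
  obtains r where "strict_mono r" "\<And>m. convergent (\<lambda>i. X m (r i))"
proof -
  define P where "P m r \<longleftrightarrow> convergent (\<lambda>i. X m (r i))" for m and r :: "nat \<Rightarrow> nat"
  interpret subseqs P
  proof
    fix m and s :: "nat \<Rightarrow> nat" assume s: "strict_mono s"
    obtain K S where "compact S" and S: "\<And>k. k \<ge> K \<Longrightarrow> X m k \<in> S"
      using assms by blast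
    have "\<forall>i. X m (s (i + K)) \<in> S"
      using S seq_suble[OF s] by (meson le_add2 order_trans)
    then obtain r0 l where "strict_mono r0" "((\<lambda>i. X m (s (i + K))) \<circ> r0) \<longlonglongrightarrow> l"
      using compact_imp_seq_compact[OF \<open>compact S\<close>] seq_compactE by metis
    then show "\<exists>r'. strict_mono r' \<and> P m (s \<circ> r')"
      by (intro exI[of _ "\<lambda>i. r0 i + K"]) (auto simp: strict_mono_def P_def o_def convergent_def)
  qed
  have "convergent (\<lambda>i. X m (diagseq i))" for m
  proof -
    have "P m (diagseq \<circ> (+) (Suc m))"
      by (rule diagseq_holds) (auto simp: P_def o_def intro: convergent_subseq_convergent[unfolded o_def])
    then have "convergent (\<lambda>i. X m (diagseq (i + Suc m)))"
      by (simp add: P_def o_def add.commute)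
    then show ?thesis
      using convergent_ignore_initial_segment[of "\<lambda>i. X m (diagseq i)" "Suc m"] by simp
  qed
  then show ?thesis using that subseq_diagseq by blast
qed

lemma continuous_on_Iic_if_continuous_on_Icc:
  fixes f :: "real \<Rightarrow> 'b::topological_space"
  assumes "\<And>m::nat. continuous_on {- real m..b} f"
  shows "continuous_on {..b} f"
  unfolding continuous_on_eq_continuous_within
proof
  fix t assume "t \<in> {..b}"
  obtain m :: nat where m: "- t < real m"
    using reals_Archimedean2 by blast
  have "continuous (at t within {- real m..b}) f"
    using assms[of m] m \<open>t \<in> {..b}\<close> by (simp add: continuous_on_eq_continuous_within)
  moreover have "at t within {..b} = at t within {- real m..b}"
    by (rule at_within_nhd[of t "{- real m<..}"]) (use m in auto)
  ultimately show "continuous (at t within {..b}) f" by simp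
qed

lemma uniform_limit_lim_if_uniformly_Cauchy_on:
  fixes f :: "nat \<Rightarrow> 'b \<Rightarrow> 'c::complete_space"
  assumes "uniformly_Cauchy_on X f"
  shows "uniform_limit X f (\<lambda>x. lim (\<lambda>n. f n x)) sequentially"
proof -
  obtain l where l: "uniform_limit X f l sequentially"
    using Cauchy_uniformly_convergent[OF assms] unfolding uniformly_convergent_on_def by blast
  have "l x = lim (\<lambda>n. f n x)" if "x \<in> X" for x
    using tendsto_uniform_limitI[OF l that] by (rule limI[symmetric])
  then have "uniform_limit X f l sequentially = uniform_limit X f (\<lambda>x. lim (\<lambda>n. f n x)) sequentially"
    by (intro uniform_limit_cong') simp_all
  with l show ?thesis by simp
qed

lemma compact_coefficient_box:
  fixes e :: "nat \<Rightarrow> 'a::real_normed_vector"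
  shows "compact ((\<lambda>c. \<Sum>j<M. c j *\<^sub>R e j) ` {c. \<forall>j<M. \<bar>c j\<bar> \<le> B j})"
proof (induction M)
  case 0
  then show ?case by (simp add: image_constant_conv)
next
  case (Suc M)
  let ?C = "(\<lambda>c. \<Sum>j<M. c j *\<^sub>R e j) ` {c. \<forall>j<M. \<bar>c j\<bar> \<le> B j}"
  let ?D = "(\<lambda>a. a *\<^sub>R e M) ` {-B M..B M}"
  have "compact ?D"
    by (intro compact_continuous_image compact_Icc continuous_intros)
  moreover have "(\<lambda>c. \<Sum>j<Suc M. c j *\<^sub>R e j) ` {c. \<forall>j<Suc M. \<bar>c j\<bar> \<le> B j}
      = {x + y | x y. x \<in> ?C \<and> y \<in> ?D}" (is "?L = ?R")
  proof
    show "?L \<subseteq> ?R"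
      by (fastforce simp: abs_le_iff less_Suc_eq)
    show "?R \<subseteq> ?L"
    proof
      fix z assume "z \<in> ?R"
      then obtain c a where z: "z = (\<Sum>j<M. c j *\<^sub>R e j) + a *\<^sub>R e M"
        and c: "\<forall>j<M. \<bar>c j\<bar> \<le> B j" and a: "a \<in> {-B M..B M}"
        by blast
      have "(\<Sum>j<M. (c(M := a)) j *\<^sub>R e j) = (\<Sum>j<M. c j *\<^sub>R e j)"
        by (rule sum.cong) auto
      then have "z = (\<Sum>j<Suc M. (c(M := a)) j *\<^sub>R e j)"
        using z by simp
      moreover have "\<forall>j<Suc M. \<bar>(c(M := a)) j\<bar> \<le> B j"
        using c a by (auto simp: less_Suc_eq abs_le_iff)
      ultimately show "z \<in> ?L" by blast
    qed
  qed
  ultimately show ?case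
    using compact_sums[OF Suc.IH] by simp
qed

lemma compact_closure_if_coefficients_bounded:
  fixes e :: "nat \<Rightarrow> 'a::{real_inner,complete_space}"
  assumes coeffs: "\<And>x j. x \<in> S \<Longrightarrow> \<bar>x \<bullet> e j\<bar> \<le> B j"
    and tails: "\<And>\<epsilon>. \<epsilon> > 0 \<Longrightarrow> \<exists>M. \<forall>x\<in>S. norm (projQ e M x) \<le> \<epsilon>"
  shows "compact (closure S)"
  unfolding compact_eq_totally_bounded
proof (intro conjI allI impI)
  show "complete (closure S)" by (simp add: complete_eq_closed)
  fix \<epsilon> :: real assume "\<epsilon> > 0"
  then obtain M where M: "\<And>x. x \<in> S \<Longrightarrow> norm (projQ e M x) \<le> \<epsilon> / 3"
    using tails[of "\<epsilon> / 3"] by auto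
  let ?C = "(\<lambda>c. \<Sum>j<M. c j *\<^sub>R e j) ` {c. \<forall>j<M. \<bar>c j\<bar> \<le> B j}"
  obtain k where "finite k" and k: "?C \<subseteq> (\<Union>x\<in>k. ball x (\<epsilon> / 3))"
    using compact_coefficient_box[of e M B] \<open>\<epsilon> > 0\<close> unfolding compact_eq_totally_bounded
    by (meson divide_pos_pos zero_less_numeral)
  have "closure S \<subseteq> (\<Union>x\<in>k. ball x \<epsilon>)"
  proof
    fix z assume "z \<in> closure S"
    then obtain x where x: "x \<in> S" "dist x z < \<epsilon> / 3"
      using closure_approachable \<open>\<epsilon> > 0\<close> by (metis divide_pos_pos zero_less_numeral)
    have "projP e M x \<in> ?C"
      using coeffs[OF x(1)] unfolding projP_def by (intro image_eqI[of _ _ "\<lambda>k. x \<bullet> e k"]) auto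
    then obtain c where c: "c \<in> k" "dist c (projP e M x) < \<epsilon> / 3"
      using k by auto
    have "dist (projP e M x) x = norm (projQ e M x)"
      by (simp add: projQ_def dist_norm norm_minus_commute)
    then have "dist c z < \<epsilon>"
      using M[OF x(1)] c(2) x(2) dist_triangle[of c z "projP e M x"] dist_triangle[of "projP e M x" z x]
      by linarith
    with c(1) show "z \<in> (\<Union>x\<in>k. ball x \<epsilon>)" by auto
  qed
  with \<open>finite k\<close> show "\<exists>k. finite k \<and> closure S \<subseteq> (\<Union>x\<in>k. ball x \<epsilon>)" by blast
qed

locale orthonormal_expansion =
  fixes e :: "nat \<Rightarrow> 'a::{real_inner,complete_space}"
  assumes orthonormal: "\<And>i j. e i \<bullet> e j = (if i = j then 1 else 0)"
    and expansion: "\<And>x. (\<lambda>n. \<Sum>k<n. (x \<bullet> e k) *\<^sub>R e k) \<longlonglongrightarrow> x"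
begin

abbreviation "Q \<equiv> projQ e"

lemma abs_inner_e_le: "\<bar>x \<bullet> e j\<bar> \<le> norm x"
  using Cauchy_Schwarz_ineq2[of x "e j"] orthonormal[of j j] by (simp add: norm_eq_sqrt_inner)

lemma inner_sum_scaleR_e:
  assumes "finite A"
  shows "(\<Sum>k\<in>A. c k *\<^sub>R e k) \<bullet> e j = (if j \<in> A then c j else 0)"
  using assms by (simp add: inner_sum_left orthonormal if_distrib[of "\<lambda>x. c _ * x"] sum.delta' cong: if_cong)

lemma norm_sum_scaleR_e_squared:
  assumes "finite A"
  shows "(norm (\<Sum>k\<in>A. c k *\<^sub>R e k))\<^sup>2 = (\<Sum>k\<in>A. (c k)\<^sup>2)"
proof -
  have "(norm (\<Sum>k\<in>A. c k *\<^sub>R e k))\<^sup>2 = (\<Sum>k\<in>A. c k * (e k \<bullet> (\<Sum>k\<in>A. c k *\<^sub>R e k)))"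
    by (simp add: power2_norm_eq_inner inner_sum_left)
  also have "\<dots> = (\<Sum>k\<in>A. (c k)\<^sup>2)"
    using assms by (intro sum.cong) (auto simp: inner_commute[of "e _"] inner_sum_scaleR_e power2_eq_square)
  finally show ?thesis .
qed

lemma parseval: "(\<lambda>k. (x \<bullet> e k)\<^sup>2) sums (norm x)\<^sup>2"
proof -
  have "(\<lambda>n. (norm (\<Sum>k<n. (x \<bullet> e k) *\<^sub>R e k))\<^sup>2) \<longlonglongrightarrow> (norm x)\<^sup>2"
    by (intro tendsto_intros expansion)
  then show ?thesis unfolding sums_def by (simp add: norm_sum_scaleR_e_squared)
qed

lemma eq_if_coefficients_eq:
  assumes "\<And>j. x \<bullet> e j = y \<bullet> e j"
  shows "x = y"
  using expansion[of x] expansion[of y] LIMSEQ_unique by (simp add: assms)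

lemma norm_le_if_coefficients_le:
  assumes "\<And>j. (v \<bullet> e j)\<^sup>2 \<le> a\<^sup>2 * (w \<bullet> e j)\<^sup>2"
  shows "norm v \<le> \<bar>a\<bar> * norm w"
proof -
  have "(\<lambda>k. a\<^sup>2 * (w \<bullet> e k)\<^sup>2) sums (a\<^sup>2 * (norm w)\<^sup>2)"
    by (intro sums_mult parseval)
  then have "(norm v)\<^sup>2 \<le> (\<bar>a\<bar> * norm w)\<^sup>2"
    using sums_le[OF assms parseval] by (simp add: power_mult_distrib)
  then show ?thesis by (rule power2_le_imp_le) simp
qed

lemma square_summable_series:
  assumes "summable (\<lambda>k. (c k)\<^sup>2)"
  shows "summable (\<lambda>k. c k *\<^sub>R e k)" and "(\<Sum>k. c k *\<^sub>R e k) \<bullet> e j = c j"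
proof -
  have "Cauchy (\<lambda>n. \<Sum>k<n. c k *\<^sub>R e k)"
  proof (rule CauchyI')
    fix \<epsilon> :: real assume "\<epsilon> > 0"
    then obtain M where M: "\<forall>m\<ge>M. \<forall>n. norm (\<Sum>k\<in>{m..<n}. (c k)\<^sup>2) < \<epsilon>\<^sup>2"
      using assms unfolding summable_Cauchy by (meson zero_less_power)
    show "\<exists>M. \<forall>m\<ge>M. \<forall>n>m. dist (\<Sum>k<m. c k *\<^sub>R e k) (\<Sum>k<n. c k *\<^sub>R e k) < \<epsilon>"
    proof (intro exI allI impI)
      fix m n assume "m \<ge> M" "n > m"
      have "(norm (\<Sum>k\<in>{m..<n}. c k *\<^sub>R e k))\<^sup>2 < \<epsilon>\<^sup>2"
        using M \<open>m \<ge> M\<close> by (simp add: norm_sum_scaleR_e_squared) (meson abs_less_iff)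
      then have "norm (\<Sum>k\<in>{m..<n}. c k *\<^sub>R e k) < \<epsilon>"
        using \<open>\<epsilon> > 0\<close> by (simp add: power_less_imp_less_base)
      moreover have "(\<Sum>k<n. c k *\<^sub>R e k) = (\<Sum>k<m. c k *\<^sub>R e k) + (\<Sum>k\<in>{m..<n}. c k *\<^sub>R e k)"
        using \<open>n > m\<close> by (simp add: lessThan_atLeast0 sum.atLeastLessThan_concat)
      ultimately show "dist (\<Sum>k<m. c k *\<^sub>R e k) (\<Sum>k<n. c k *\<^sub>R e k) < \<epsilon>"
        by (simp add: dist_norm)
    qed
  qed
  then show summable: "summable (\<lambda>k. c k *\<^sub>R e k)"
    unfolding Cauchy_convergent_iff convergent_def summable_def sums_def .
  have "(\<lambda>k. (c k *\<^sub>R e k) \<bullet> e j) sums ((\<Sum>k. c k *\<^sub>R e k) \<bullet> e j)"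
    by (rule bounded_linear.sums[OF bounded_linear_inner_left summable_sums[OF summable]])
  moreover have "(\<lambda>k. (c k *\<^sub>R e k) \<bullet> e j) = (\<lambda>k. if k = j then c k else 0)"
    by (auto simp: orthonormal)
  ultimately show "(\<Sum>k. c k *\<^sub>R e k) \<bullet> e j = c j"
    using sums_single[of j c] sums_unique2 by metis
qed

lemma projQ_coefficient: "Q M x \<bullet> e j = (if j < M then 0 else x \<bullet> e j)"
  by (simp add: projQ_def projP_def inner_diff_left inner_sum_scaleR_e)

lemma norm_projQ_le: "norm (Q M x) \<le> norm x"
  using norm_le_if_coefficients_le[of "Q M x" 1 x] by (simp add: projQ_coefficient)

lemma bounded_linear_projQ: "bounded_linear (Q M)"
proof (rule bounded_linear_intro[where K=1])
  show "Q M (x + y) = Q M x + Q M y" for x y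
    by (rule eq_if_coefficients_eq) (simp add: projQ_coefficient inner_add_left)
  show "Q M (r *\<^sub>R x) = r *\<^sub>R Q M x" for r x
    by (rule eq_if_coefficients_eq) (simp add: projQ_coefficient)
  show "norm (Q M x) \<le> norm x * 1" for x
    using norm_projQ_le by simp
qed

lemma projQ_eq_0_mono: "N \<le> M \<Longrightarrow> Q N x = 0 \<Longrightarrow> Q M x = 0"
  by (rule eq_if_coefficients_eq) (metis projQ_coefficient inner_zero_left order_less_le_trans)

end

locale spectral_semigroup = orthonormal_expansion +
  fixes lam :: "nat \<Rightarrow> real"
  assumes lam_pos: "\<And>j. lam j > 0"
    and lam_mono: "mono lam"
begin

abbreviation "E \<equiv> expA e lam"

lemma exp_decay_le: "t \<ge> 0 \<Longrightarrow> lam i \<le> lam j \<Longrightarrow> exp (- (t * lam j)) \<le> exp (- (t * lam i))"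
  by (simp add: mult_left_mono)

lemma exp_decay_le_1: "t \<ge> 0 \<Longrightarrow> exp (- (t * lam j)) \<le> 1"
  using lam_pos[of j] by simp

lemma expA_coefficient:
  assumes "t \<ge> 0"
  shows "E t x \<bullet> e j = exp (- (t * lam j)) * (x \<bullet> e j)"
proof -
  have "summable (\<lambda>k. (exp (- (t * lam k)) * (x \<bullet> e k))\<^sup>2)"
  proof (rule summable_comparison_test')
    show "summable (\<lambda>k. (x \<bullet> e k)\<^sup>2)" using parseval sums_summable by blast
    show "norm ((exp (- (t * lam k)) * (x \<bullet> e k))\<^sup>2) \<le> (x \<bullet> e k)\<^sup>2" for k
      using exp_decay_le_1[OF assms, of k]
      by (simp add: power_mult_distrib mult_left_le_one_le power_le_one)
  qed
  then show ?thesis unfolding expA_def by (rule square_summable_series(2))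
qed

lemma norm_projQ_expA_le:
  assumes "t \<ge> 0"
  shows "norm (Q M (E t x)) \<le> exp (- (t * lam M)) * norm (Q M x)"
proof -
  have "norm (Q M (E t x)) \<le> \<bar>exp (- (t * lam M))\<bar> * norm (Q M x)"
  proof (rule norm_le_if_coefficients_le)
    fix j
    show "(Q M (E t x) \<bullet> e j)\<^sup>2 \<le> (exp (- (t * lam M)))\<^sup>2 * (Q M x \<bullet> e j)\<^sup>2"
    proof (cases "j < M")
      case False
      then have "exp (- (t * lam j)) \<le> exp (- (t * lam M))"
        using assms lam_mono by (intro exp_decay_le) (simp_all add: mono_def)
      then show ?thesis using False
        by (simp add: projQ_coefficient expA_coefficient[OF assms] power_mult_distrib mult_right_mono power_mono)
    qed (simp add: projQ_coefficient)
  qed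
  then show ?thesis by simp
qed

lemma norm_expA_le:
  assumes "t \<ge> 0" shows "norm (E t x) \<le> norm x"
proof -
  have "norm (E t x) \<le> exp (- (t * lam 0)) * norm x"
    using norm_projQ_expA_le[OF assms, of 0 x] by (simp add: projQ_def projP_def)
  also have "\<dots> \<le> 1 * norm x"
    using exp_decay_le_1[OF assms] by (intro mult_right_mono) simp_all
  finally show ?thesis by simp
qed

lemma bounded_linear_expA:
  assumes "t \<ge> 0" shows "bounded_linear (E t)"
proof (rule bounded_linear_intro[where K=1])
  show "E t (x + y) = E t x + E t y" for x y
    by (rule eq_if_coefficients_eq) (simp add: expA_coefficient[OF assms] inner_add_left algebra_simps)
  show "E t (r *\<^sub>R x) = r *\<^sub>R E t x" for r x
    by (rule eq_if_coefficients_eq) (simp add: expA_coefficient[OF assms])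
  show "norm (E t x) \<le> norm x * 1" for x
    using norm_expA_le[OF assms] by simp
qed

lemma expA_diff: "t \<ge> 0 \<Longrightarrow> E t x - E t y = E t (x - y)"
  using linear_diff[OF bounded_linear.linear[OF bounded_linear_expA]] by metis

end

lemma has_integral_exp_decay:
  fixes L t :: real
  assumes "L > 0" "t \<ge> 0"
  shows "((\<lambda>\<tau>. exp (- ((t - \<tau>) * L))) has_integral (1 - exp (- (t * L))) / L) {0..t}"
proof -
  have "((\<lambda>\<tau>. exp (- ((t - \<tau>) * L))) has_integral
      exp (- ((t - t) * L)) / L - exp (- ((t - 0) * L)) / L) {0..t}"
    using assms by (intro fundamental_theorem_of_calculus)
      (auto intro!: derivative_eq_intros simp: has_real_derivative_iff_has_vector_derivative[symmetric])
  then show ?thesis by (simp add: diff_divide_distrib)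
qed

locale mild_evolution = spectral_semigroup +
  fixes F :: "'a \<Rightarrow> 'a" and K0 K1 :: real
  assumes F_bounded: "\<And>u. norm (F u) \<le> K0"
    and F_lipschitz: "\<And>u v. norm (F u - F v) \<le> K1 * norm (u - v)"
    and K1_pos: "K1 > 0"
begin

abbreviation "solution \<equiv> is_solution e lam F"

lemma K0_nonneg: "K0 \<ge> 0"
  using norm_ge_zero F_bounded by (rule order_trans)

lemma norm_expA_F_diff_le:
  "t \<ge> 0 \<Longrightarrow> norm (E t (F u) - E t (F v)) \<le> K1 * norm (u - v)"
  using norm_expA_le[of t "F u - F v"] F_lipschitz[of u v] by (simp add: expA_diff)

lemma solutionD:
  "solution J u \<Longrightarrow> s \<in> J \<Longrightarrow> t \<in> J \<Longrightarrow> s \<le> t \<Longrightarrow>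
   ((\<lambda>\<tau>. E (t - \<tau>) (F (u \<tau>))) has_integral (u t - E (t - s) (u s))) {s..t}"
  unfolding is_solution_def by blast

lemma solution_continuous_on: "solution J u \<Longrightarrow> continuous_on J u"
  unfolding is_solution_def by blast

lemma solution_subset: "solution J u \<Longrightarrow> J' \<subseteq> J \<Longrightarrow> solution J' u"
  unfolding is_solution_def by (meson continuous_on_subset subsetD)

lemma solution_shift:
  assumes "solution {a..b} u"
  shows "solution {a - c..b - c} (\<lambda>t. u (t + c))"
  unfolding is_solution_def
proof (intro conjI ballI impI)
  show "continuous_on {a - c..b - c} (\<lambda>t. u (t + c))"
    by (rule continuous_on_compose2[OF solution_continuous_on[OF assms]]) (auto intro!: continuous_intros)
  fix s t assume "s \<in> {a - c..b - c}" "t \<in> {a - c..b - c}" "s \<le> t"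
  then have "((\<lambda>\<tau>. E (t + c - \<tau>) (F (u \<tau>))) has_integral (u (t + c) - E (t - s) (u (s + c)))) {s + c..t + c}"
    using solutionD[OF assms, of "s + c" "t + c"] by simp
  then have "(((\<lambda>\<tau>. E (t + c - \<tau>) (F (u \<tau>))) \<circ> (+) c) has_integral (u (t + c) - E (t - s) (u (s + c)))) {s..t}"
    by (rule has_integral_shift_Icc_real[THEN iffD2])
  then show "((\<lambda>\<tau>. E (t - \<tau>) (F (u (\<tau> + c)))) has_integral (u (t + c) - E (t - s) (u (s + c)))) {s..t}"
    by (simp add: o_def add.commute)
qed

lemma solution_Iic_if_solution_Icc:
  assumes "\<And>m::nat. solution {- real m..0} u"
  shows "solution {..0} u"
  unfolding is_solution_def
proof (intro conjI ballI impI)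
  show "continuous_on {..0} u"
    by (intro continuous_on_Iic_if_continuous_on_Icc solution_continuous_on assms)
  fix s t :: real assume "s \<in> {..0}" "t \<in> {..0}" "s \<le> t"
  moreover obtain m :: nat where "- s \<le> real m"
    using real_arch_simple by blast
  ultimately show "((\<lambda>\<tau>. E (t - \<tau>) (F (u \<tau>))) has_integral (u t - E (t - s) (u s))) {s..t}"
    using solutionD[OF assms[of m], of s t] by simp
qed

lemma solution_coefficient_has_integral:
  assumes "solution J u" "s \<in> J" "t \<in> J" "s \<le> t"
  shows "((\<lambda>\<tau>. exp (- ((t - \<tau>) * lam j)) * (F (u \<tau>) \<bullet> e j)) has_integral
           (u t \<bullet> e j - exp (- ((t - s) * lam j)) * (u s \<bullet> e j))) {s..t}"
proof -
  have "(((\<lambda>x. x \<bullet> e j) \<circ> (\<lambda>\<tau>. E (t - \<tau>) (F (u \<tau>)))) has_integral (u t - E (t - s) (u s)) \<bullet> e j) {s..t}"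
    by (rule has_integral_linear[OF solutionD[OF assms] bounded_linear_inner_left])
  then have "((\<lambda>\<tau>. exp (- ((t - \<tau>) * lam j)) * (F (u \<tau>) \<bullet> e j)) has_integral
      (u t - E (t - s) (u s)) \<bullet> e j) {s..t}"
    by (rule has_integral_eq[rotated]) (simp add: expA_coefficient)
  then show ?thesis
    using assms(4) by (simp add: inner_diff_left expA_coefficient)
qed

lemma abs_coefficient_backward_le:
  assumes "solution J u" "s \<in> J" "t \<in> J" "s \<le> t"
  shows "\<bar>u s \<bullet> e j\<bar> \<le> exp ((t - s) * lam j) * (norm (u t) + K0 * (t - s))"
proof -
  define I where "I = u t \<bullet> e j - exp (- ((t - s) * lam j)) * (u s \<bullet> e j)"
  have integral: "((\<lambda>\<tau>. exp (- ((t - \<tau>) * lam j)) * (F (u \<tau>) \<bullet> e j)) has_integral I) (cbox s t)"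
    using solution_coefficient_has_integral[OF assms, of j] by (simp add: I_def)
  have "\<bar>exp (- ((t - \<tau>) * lam j)) * (F (u \<tau>) \<bullet> e j)\<bar> \<le> K0" if "\<tau> \<in> cbox s t" for \<tau>
  proof -
    have "exp (- ((t - \<tau>) * lam j)) \<le> 1" using that by (intro exp_decay_le_1) auto
    moreover have "\<bar>F (u \<tau>) \<bullet> e j\<bar> \<le> K0" using abs_inner_e_le F_bounded order_trans by blast
    ultimately have "exp (- ((t - \<tau>) * lam j)) * \<bar>F (u \<tau>) \<bullet> e j\<bar> \<le> 1 * K0"
      by (intro mult_mono) auto
    then show ?thesis by (simp add: abs_mult)
  qed
  then have "\<bar>I\<bar> \<le> K0 * (t - s)"
    using has_integral_bound[OF K0_nonneg integral] assms(4) by simp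
  then have "exp (- ((t - s) * lam j)) * \<bar>u s \<bullet> e j\<bar> \<le> norm (u t) + K0 * (t - s)"
    using abs_inner_e_le[of "u t" j] by (simp add: I_def abs_mult)
  then have "exp ((t - s) * lam j) * (exp (- ((t - s) * lam j)) * \<bar>u s \<bullet> e j\<bar>)
      \<le> exp ((t - s) * lam j) * (norm (u t) + K0 * (t - s))"
    by (intro mult_left_mono) auto
  then show ?thesis by (simp add: mult.assoc[symmetric] exp_add[symmetric])
qed

lemma norm_projQ_solution_le:
  assumes "solution {0..T} u" "Q M (u 0) = 0" "0 \<le> t" "t \<le> T"
  shows "norm (Q M (u t)) \<le> K0 / lam M"
proof -
  have "((Q M \<circ> (\<lambda>\<tau>. E (t - \<tau>) (F (u \<tau>)))) has_integral Q M (u t - E t (u 0))) {0..t}"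
    using solutionD[OF assms(1), of 0 t] assms by (intro has_integral_linear[OF _ bounded_linear_projQ]) auto
  moreover have "Q M (E t (u 0)) = 0"
    using norm_projQ_expA_le[of t M "u 0"] assms by simp
  ultimately have integral: "((Q M \<circ> (\<lambda>\<tau>. E (t - \<tau>) (F (u \<tau>)))) has_integral Q M (u t)) {0..t}"
    by (simp add: linear_diff[OF bounded_linear.linear[OF bounded_linear_projQ]])
  have bound: "((\<lambda>\<tau>. K0 * exp (- ((t - \<tau>) * lam M))) has_integral K0 * ((1 - exp (- (t * lam M))) / lam M)) {0..t}"
    using has_integral_mult_right[OF has_integral_exp_decay[OF lam_pos \<open>0 \<le> t\<close>]] .
  have "norm (Q M (u t)) \<le> K0 * ((1 - exp (- (t * lam M))) / lam M)"
  proof (rule norm_le_if_has_integral_norm_le[OF integral bound])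
    fix \<tau> assume "\<tau> \<in> {0..t}"
    then have "norm (Q M (E (t - \<tau>) (F (u \<tau>)))) \<le> exp (- ((t - \<tau>) * lam M)) * norm (Q M (F (u \<tau>)))"
      by (intro norm_projQ_expA_le) simp
    also have "\<dots> \<le> exp (- ((t - \<tau>) * lam M)) * norm (F (u \<tau>))"
      by (intro mult_left_mono norm_projQ_le) simp
    also have "\<dots> \<le> exp (- ((t - \<tau>) * lam M)) * K0"
      by (intro mult_left_mono F_bounded) simp
    finally show "norm ((Q M \<circ> (\<lambda>\<tau>. E (t - \<tau>) (F (u \<tau>)))) \<tau>) \<le> K0 * exp (- ((t - \<tau>) * lam M))"
      by (simp add: mult.commute)
  qed
  also have "\<dots> \<le> K0 * (1 / lam M)"
    using K0_nonneg lam_pos[of M] by (intro mult_left_mono divide_right_mono) auto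
  finally show ?thesis by simp
qed

text \<open>On an interval of length at most \<open>1 / (2 * K1)\<close> the integral term contributes at most half
  of the maximal distance, so the distance can at most double.\<close>

lemma solution_dist_le_double:
  assumes v: "solution J v" and w: "solution J w" and "{s..t} \<subseteq> J" "s \<le> t"
    and short: "2 * K1 * (t - s) \<le> 1"
  shows "norm (v t - w t) \<le> 2 * norm (v s - w s)"
proof -
  let ?d = "\<lambda>\<tau>. norm (v \<tau> - w \<tau>)"
  have "continuous_on {s..t} v" "continuous_on {s..t} w"
    using solution_continuous_on[OF v] solution_continuous_on[OF w] \<open>{s..t} \<subseteq> J\<close>
    by (auto intro: continuous_on_subset)
  then have "continuous_on {s..t} ?d"
    by (intro continuous_intros)
  then obtain \<tau>0 where \<tau>0: "\<tau>0 \<in> {s..t}" and max: "\<And>\<tau>. \<tau> \<in> {s..t} \<Longrightarrow> ?d \<tau> \<le> ?d \<tau>0"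
    using continuous_attains_sup[OF compact_Icc _ \<open>continuous_on {s..t} ?d\<close>] \<open>s \<le> t\<close> by auto
  define I where "I = (v \<tau>0 - E (\<tau>0 - s) (v s)) - (w \<tau>0 - E (\<tau>0 - s) (w s))"
  have integral: "((\<lambda>\<tau>. E (\<tau>0 - \<tau>) (F (v \<tau>)) - E (\<tau>0 - \<tau>) (F (w \<tau>))) has_integral I) (cbox s \<tau>0)"
    unfolding I_def using assms \<tau>0 by (auto intro!: has_integral_diff solutionD)
  have bound: "norm (E (\<tau>0 - \<tau>) (F (v \<tau>)) - E (\<tau>0 - \<tau>) (F (w \<tau>))) \<le> K1 * ?d \<tau>0"
    if "\<tau> \<in> cbox s \<tau>0" for \<tau>
  proof -
    have "\<tau> \<le> \<tau>0" "\<tau> \<in> {s..t}"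
      using that \<tau>0 by auto
    then have "norm (E (\<tau>0 - \<tau>) (F (v \<tau>)) - E (\<tau>0 - \<tau>) (F (w \<tau>))) \<le> K1 * ?d \<tau>"
      by (intro norm_expA_F_diff_le) simp
    also have "\<dots> \<le> K1 * ?d \<tau>0"
      using max[OF \<open>\<tau> \<in> {s..t}\<close>] K1_pos by (intro mult_left_mono) auto
    finally show ?thesis .
  qed
  have "norm I \<le> K1 * ?d \<tau>0 * (\<tau>0 - s)"
    using has_integral_bound[OF _ integral bound] K1_pos \<tau>0 by simp
  also have "\<dots> = ?d \<tau>0 * (K1 * (\<tau>0 - s))"
    by simp
  also have "\<dots> \<le> ?d \<tau>0 * (1 / 2)"
  proof (rule mult_left_mono)
    have "K1 * (\<tau>0 - s) \<le> K1 * (t - s)"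
      using \<tau>0 K1_pos by (intro mult_left_mono) auto
    then show "K1 * (\<tau>0 - s) \<le> 1 / 2"
      using short by linarith
  qed simp
  finally have "norm I \<le> ?d \<tau>0 / 2" by simp
  have "v \<tau>0 - w \<tau>0 = E (\<tau>0 - s) (v s - w s) + I"
    using \<tau>0 by (simp add: I_def expA_diff[symmetric] algebra_simps)
  then have "?d \<tau>0 \<le> ?d s + ?d \<tau>0 / 2"
    using norm_triangle_ineq[of "E (\<tau>0 - s) (v s - w s)" I] norm_expA_le[of "\<tau>0 - s" "v s - w s"]
      \<tau>0 \<open>norm I \<le> ?d \<tau>0 / 2\<close> by simp
  then show ?thesis
    using max[of t] \<open>s \<le> t\<close> by simp
qed

lemma solution_dist_le_pow2:
  assumes v: "solution J v" and w: "solution J w" and "{s..t} \<subseteq> J" "s \<le> t"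
    and "2 * K1 * (t - s) \<le> real n"
  shows "norm (v t - w t) \<le> 2 ^ n * norm (v s - w s)"
  using assms(3-)
proof (induction n arbitrary: t)
  case 0
  then show ?case using K1_pos by (simp add: mult_le_0_iff)
next
  case (Suc n)
  define h where "h = 1 / (2 * K1)"
  have h: "2 * K1 * h = 1" "h > 0"
    using K1_pos by (simp_all add: h_def)
  define r where "r = max s (t - h)"
  have "2 * K1 * (r - s) \<le> real n"
  proof (cases "s \<le> t - h")
    case True
    then have "2 * K1 * (r - s) = 2 * K1 * (t - s) - 2 * K1 * h"
      by (simp add: r_def algebra_simps)
    then show ?thesis using Suc.prems h by simp
  qed (simp add: r_def)
  moreover have "2 * K1 * (t - r) \<le> 2 * K1 * h"
    using K1_pos by (intro mult_left_mono) (auto simp: r_def)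
  ultimately have r: "s \<le> r" "r \<le> t" "2 * K1 * (r - s) \<le> real n" "2 * K1 * (t - r) \<le> 1"
    using Suc.prems h by (auto simp: r_def)
  have "{s..r} \<subseteq> {s..t}"
    using r(2) by simp
  then have "{s..r} \<subseteq> J"
    using Suc.prems(1) by (rule subset_trans)
  have "norm (v t - w t) \<le> 2 * norm (v r - w r)"
    using Suc.prems r by (intro solution_dist_le_double[OF v w]) auto
  also have "\<dots> \<le> 2 * (2 ^ n * norm (v s - w s))"
    using Suc.IH[OF \<open>{s..r} \<subseteq> J\<close>] r by simp
  finally show ?case by simp
qed

lemma solution_uniform_limit:
  assumes solutions: "\<forall>\<^sub>F i in sequentially. solution {a..b} (V i)"
    and unif: "uniform_limit {a..b} V U sequentially"
  shows "solution {a..b} U"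
  unfolding is_solution_def
proof (intro conjI ballI impI)
  show "continuous_on {a..b} U"
    using solutions by (intro uniform_limit_theorem[OF _ unif]) (auto elim: eventually_mono intro: solution_continuous_on)
  fix s t assume st: "s \<in> {a..b}" "t \<in> {a..b}" "s \<le> t"
  then have sub: "{s..t} \<subseteq> {a..b}" by auto
  show "((\<lambda>\<tau>. E (t - \<tau>) (F (U \<tau>))) has_integral (U t - E (t - s) (U s))) {s..t}"
  proof (rule has_integral_uniform_limit[where g="\<lambda>i \<tau>. E (t - \<tau>) (F (V i \<tau>))", unfolded box_real])
    show "uniform_limit {s..t} (\<lambda>i \<tau>. E (t - \<tau>) (F (V i \<tau>))) (\<lambda>\<tau>. E (t - \<tau>) (F (U \<tau>))) sequentially"
      unfolding uniform_limit_iff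
    proof (intro allI impI)
      fix \<epsilon> :: real assume "\<epsilon> > 0"
      then have "\<forall>\<^sub>F i in sequentially. \<forall>\<tau>\<in>{s..t}. dist (V i \<tau>) (U \<tau>) < \<epsilon> / K1"
        using uniform_limit_on_subset[OF unif sub] K1_pos by (simp add: uniform_limit_iff)
      then show "\<forall>\<^sub>F i in sequentially. \<forall>\<tau>\<in>{s..t}. dist (E (t - \<tau>) (F (V i \<tau>))) (E (t - \<tau>) (F (U \<tau>))) < \<epsilon>"
      proof eventually_elim
        case (elim i)
        show ?case
        proof
          fix \<tau> assume "\<tau> \<in> {s..t}"
          then have "dist (E (t - \<tau>) (F (V i \<tau>))) (E (t - \<tau>) (F (U \<tau>))) \<le> K1 * dist (V i \<tau>) (U \<tau>)"
            using norm_expA_F_diff_le by (simp add: dist_norm)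
          also have "\<dots> < \<epsilon>"
            using elim \<open>\<tau> \<in> {s..t}\<close> K1_pos by (simp add: field_simps)
          finally show "dist (E (t - \<tau>) (F (V i \<tau>))) (E (t - \<tau>) (F (U \<tau>))) < \<epsilon>" .
        qed
      qed
    qed
    show "\<forall>\<^sub>F i in sequentially. ((\<lambda>\<tau>. E (t - \<tau>) (F (V i \<tau>))) has_integral V i t - E (t - s) (V i s)) {s..t}"
      using solutions by eventually_elim (use st in \<open>auto intro: solutionD\<close>)
    have "(\<lambda>i. V i r) \<longlonglongrightarrow> U r" if "r \<in> {a..b}" for r
      using tendsto_uniform_limitI[OF unif that] .
    then show "(\<lambda>i. V i t - E (t - s) (V i s)) \<longlonglongrightarrow> U t - E (t - s) (U s)"
      using st by (intro tendsto_diff bounded_linear.tendsto[OF bounded_linear_expA]) auto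
  qed
qed

lemma uniformly_Cauchy_on_solutions:
  assumes solutions: "\<forall>\<^sub>F i in sequentially. solution {a..b} (V i)"
    and convergent: "convergent (\<lambda>i. V i a)"
  shows "uniformly_Cauchy_on {a..b} V"
proof (rule uniformly_Cauchy_onI)
  fix \<epsilon> :: real assume "\<epsilon> > 0"
  define n where "n = nat \<lceil>2 * K1 * (b - a)\<rceil>"
  have "\<epsilon> / 2 ^ n > 0" using \<open>\<epsilon> > 0\<close> by simp
  moreover have "Cauchy (\<lambda>i. V i a)"
    using convergent by (simp add: Cauchy_convergent_iff)
  ultimately obtain I where I: "\<And>i i'. i \<ge> I \<Longrightarrow> i' \<ge> I \<Longrightarrow> norm (V i a - V i' a) < \<epsilon> / 2 ^ n"
    using CauchyD by blast
  obtain I0 where I0: "\<And>i. i \<ge> I0 \<Longrightarrow> solution {a..b} (V i)"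
    using solutions unfolding eventually_sequentially by blast
  show "\<exists>M. \<forall>t\<in>{a..b}. \<forall>i\<ge>M. \<forall>i'\<ge>M. dist (V i t) (V i' t) < \<epsilon>"
  proof (intro exI[of _ "max I I0"] ballI allI impI)
    fix t i i' assume t: "t \<in> {a..b}" and i: "max I I0 \<le> i" "max I I0 \<le> i'"
    have "2 * K1 * (t - a) \<le> 2 * K1 * (b - a)"
      using t K1_pos by (intro mult_left_mono) auto
    also have "\<dots> \<le> real n"
      unfolding n_def by (rule real_nat_ceiling_ge)
    finally have "norm (V i t - V i' t) \<le> 2 ^ n * norm (V i a - V i' a)"
      using t i by (intro solution_dist_le_pow2[OF I0[of i] I0[of i']]) auto
    also have "\<dots> < \<epsilon>"
      using I[of i i'] i by (simp add: less_divide_eq mult.commute)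
    finally show "dist (V i t) (V i' t) < \<epsilon>" by (simp add: dist_norm)
  qed
qed

lemma solution_limit:
  assumes solutions: "\<And>i. solution {- T i..0} (V i)" and T: "\<And>i. real i \<le> T i"
    and convergent: "\<And>m::nat. convergent (\<lambda>i. V i (- real m))"
  defines "U \<equiv> \<lambda>t. lim (\<lambda>i. V i t)"
  shows "solution {..0} U" and "\<And>t. t \<le> 0 \<Longrightarrow> (\<lambda>i. V i t) \<longlonglongrightarrow> U t"
proof -
  have solutions_m: "\<forall>\<^sub>F i in sequentially. solution {- real m..0} (V i)" for m :: nat
    using eventually_ge_at_top[of m]
  proof eventually_elim
    case (elim i)
    show ?case
      using solutions[of i] by (rule solution_subset) (use T[of i] elim in auto)
  qed
  then have unif: "uniform_limit {- real m..0} V U sequentially" for m :: nat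
    unfolding U_def using convergent
    by (intro uniform_limit_lim_if_uniformly_Cauchy_on uniformly_Cauchy_on_solutions)
  have "solution {- real m..0} U" for m :: nat
    using solutions_m unif by (rule solution_uniform_limit)
  then show "solution {..0} U"
    by (rule solution_Iic_if_solution_Icc)
  fix t :: real assume "t \<le> 0"
  obtain m :: nat where "- t \<le> real m"
    using real_arch_simple by blast
  then show "(\<lambda>i. V i t) \<longlonglongrightarrow> U t"
    using tendsto_uniform_limitI[OF unif[of m]] \<open>t \<le> 0\<close> by simp
qed

end

locale compact_mild_evolution = mild_evolution +
  assumes lam_at_top: "filterlim lam at_top sequentially"
begin

lemma eventually_K0_div_lam_le: "\<epsilon> > 0 \<Longrightarrow> \<forall>\<^sub>F M in sequentially. K0 / lam M \<le> \<epsilon>"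
  using filterlim_at_top[THEN iffD1, OF lam_at_top, rule_format, of "K0 / \<epsilon>"]
  by eventually_elim (use lam_pos in \<open>simp add: field_simps\<close>)

lemma compact_closure_backward_states:
  assumes "m \<ge> 0"
  shows "compact (closure {u (T - m) | u T. solution {0..T} u \<and> Q N (u 0) = 0 \<and> m \<le> T \<and> norm (u T) \<le> X})"
    (is "compact (closure ?S)")
proof (rule compact_closure_if_coefficients_bounded)
  fix x j assume "x \<in> ?S"
  then obtain u T where x: "x = u (T - m)" and u: "solution {0..T} u" "m \<le> T" "norm (u T) \<le> X"
    by blast
  have "\<bar>u (T - m) \<bullet> e j\<bar> \<le> exp (m * lam j) * (norm (u T) + K0 * m)"
    using abs_coefficient_backward_le[OF u(1), of "T - m" T j] u assms by simp
  also have "\<dots> \<le> exp (m * lam j) * (X + K0 * m)"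
    using u(3) by (intro mult_left_mono) auto
  finally show "\<bar>x \<bullet> e j\<bar> \<le> exp (m * lam j) * (X + K0 * m)"
    by (simp add: x)
next
  fix \<epsilon> :: real assume "\<epsilon> > 0"
  then have "\<forall>\<^sub>F M in sequentially. M \<ge> N \<and> K0 / lam M \<le> \<epsilon>"
    by (intro eventually_conj eventually_ge_at_top eventually_K0_div_lam_le)
  then obtain M where "M \<ge> N" "K0 / lam M \<le> \<epsilon>"
    unfolding eventually_sequentially by blast
  have "norm (Q M x) \<le> \<epsilon>" if "x \<in> ?S" for x
  proof -
    obtain u T where x: "x = u (T - m)" and u: "solution {0..T} u" "Q N (u 0) = 0" "m \<le> T"
      using \<open>x \<in> ?S\<close> by blast
    have "norm (Q M (u (T - m))) \<le> K0 / lam M"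
      by (rule norm_projQ_solution_le[OF u(1) projQ_eq_0_mono[OF \<open>M \<ge> N\<close> u(2)]]) (use u(3) assms in auto)
    with \<open>K0 / lam M \<le> \<epsilon>\<close> show ?thesis by (simp add: x)
  qed
  then show "\<exists>M. \<forall>x\<in>?S. norm (Q M x) \<le> \<epsilon>" by blast
qed

lemma convergent_subseq_backward_states:
  assumes u: "\<And>k. solution {0..T k} (u k)" and P: "\<And>k. Q N (u k 0) = 0"
    and T: "\<And>k. real k \<le> T k" and bounded: "bounded (range (\<lambda>k. u k (T k)))"
  obtains r where "strict_mono r" "\<And>m::nat. convergent (\<lambda>i. u (r i) (T (r i) - real m))"
proof (rule diagonal_convergent_subseq[of "\<lambda>m k. u k (T k - real m)"])
  fix m :: nat
  obtain X where X: "\<And>k. norm (u k (T k)) \<le> X"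
    using bounded unfolding bounded_iff by blast
  let ?S = "{u (T - real m) | u T. solution {0..T} u \<and> Q N (u 0) = 0 \<and> real m \<le> T \<and> norm (u T) \<le> X}"
  have "u k (T k - real m) \<in> ?S" if "k \<ge> m" for k
    using u[of k] P[of k] X[of k] T[of k] that by fastforce
  moreover have "compact (closure ?S)"
    by (rule compact_closure_backward_states) simp
  ultimately show "\<exists>K S. compact S \<and> (\<forall>k\<ge>K. u k (T k - real m) \<in> S)"
    by (intro exI[of _ m] exI[of _ "closure ?S"]) (auto intro: closure_subset[THEN subsetD])
qed blast

lemma M_infty_subset_M_minus_infty: "M_infty e lam N F \<subseteq> M_minus_infty e lam N F"
proof
  fix y assume "y \<in> M_infty e lam N F"
  then obtain n x where n: "strict_mono n" and xM: "\<And>k. x k \<in> Mt e lam N F (real (n k))"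
    and lim: "x \<longlonglongrightarrow> y"
    unfolding M_infty_def by blast
  have "\<forall>k. \<exists>v. x k = v (real (n k)) \<and> solution {0..real (n k)} v \<and> Q N (v 0) = 0"
    using xM unfolding Mt_def by blast
  then obtain u where x: "\<And>k. x k = u k (real (n k))"
    and u: "\<And>k. solution {0..real (n k)} (u k)" and uP: "\<And>k. Q N (u k 0) = 0"
    by metis
  have "real k \<le> real (n k)" for k
    using seq_suble[OF n] by simp
  moreover have "bounded (range (\<lambda>k. u k (real (n k))))"
    using convergent_imp_bounded[OF lim] by (simp add: x)
  ultimately obtain r where r: "strict_mono r"
    and conv: "\<And>m::nat. convergent (\<lambda>i. u (r i) (real (n (r i)) - real m))"
    by (rule convergent_subseq_backward_states[OF u uP]) blast
  define V where "V i = (\<lambda>t. u (r i) (t + real (n (r i))))" for i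
  have V: "solution {- real (n (r i))..0} (V i)" for i
    using solution_shift[OF u[of "r i"], of "real (n (r i))"] by (simp add: V_def)
  have T: "real i \<le> real (n (r i))" for i
    using seq_suble[OF r, of i] seq_suble[OF n, of "r i"] by simp
  define U where "U t = lim (\<lambda>i. V i t)" for t
  have U: "solution {..0} U" and U_lim: "\<And>t. t \<le> 0 \<Longrightarrow> (\<lambda>i. V i t) \<longlonglongrightarrow> U t"
    using solution_limit[OF V T] conv unfolding U_def by (auto simp: V_def)
  have "(\<lambda>i. V i 0) \<longlonglongrightarrow> y"
    using LIMSEQ_subseq_LIMSEQ[OF lim r] by (simp add: V_def x o_def)
  then have "U 0 = y"
    using U_lim[of 0] LIMSEQ_unique by auto
  have "norm (Q N (U t)) \<le> K0 / lam N" if "t \<le> 0" for t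
  proof (rule tendsto_upperbound)
    show "(\<lambda>i. norm (Q N (V i t))) \<longlonglongrightarrow> norm (Q N (U t))"
      using U_lim[OF that] by (intro tendsto_norm bounded_linear.tendsto[OF bounded_linear_projQ])
    obtain m :: nat where "- t \<le> real m"
      using real_arch_simple by blast
    show "\<forall>\<^sub>F i in sequentially. norm (Q N (V i t)) \<le> K0 / lam N"
      using eventually_ge_at_top[of m]
    proof eventually_elim
      case (elim i)
      then show ?case
        using T[of i] \<open>- t \<le> real m\<close> that unfolding V_def
        by (intro norm_projQ_solution_le[OF u uP]) auto
    qed
  qed simp
  then have "bounded ((\<lambda>t. Q N (U t)) ` {..0})"
    unfolding bounded_iff by auto
  with U \<open>U 0 = y\<close> show "y \<in> M_minus_infty e lam N F"
    unfolding M_minus_infty_def by blast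
qed

end

theorem theorem4p1:
  fixes e :: "nat \<Rightarrow> 'a::{real_inner,complete_space}"
    and lam :: "nat \<Rightarrow> real" and N :: nat
    and F :: "'a \<Rightarrow> 'a" and K0 K1 R :: real
  assumes orthonormal: "\<And>i j. e i \<bullet> e j = (if i = j then 1 else 0)"
    and basis: "\<And>x. (\<lambda>n. \<Sum>k<n. (x \<bullet> e k) *\<^sub>R e k) \<longlonglongrightarrow> x"
    and lam_pos: "lam 0 > 0"
    and lam_01: "lam 0 < lam 1"
    and lam_mono: "mono lam"
    and lam_infty: "filterlim lam at_top sequentially"
    and N_pos: "N \<ge> 1"
    and gap: "lam (N - 1) < lam N"
    and K0_pos: "K0 > 0" and K1_pos: "K1 > 0"
    and F_bounded: "\<And>u. norm (F u) \<le> K0"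
    and F_lipschitz: "\<And>u v. norm (F u - F v) \<le> K1 * norm (u - v)"
    and K1_gap: "K1 < lam N"
    and R_pos: "R > 0"
    and F_support: "\<And>u. norm u \<ge> R \<Longrightarrow> F u = 0"
  shows "M_infty e lam N F \<subseteq> M_minus_infty e lam N F"
proof -
  have "lam 0 \<le> lam j" for j
    using lam_mono by (simp add: mono_def)
  then interpret compact_mild_evolution e lam F K0 K1
    using orthonormal basis lam_pos lam_mono lam_infty F_bounded F_lipschitz K1_pos
    by unfold_locales (auto intro: less_le_trans)
  show ?thesis
    by (rule M_infty_subset_M_minus_infty)
qed

end
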